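(* Let $d>2$ and let $H$ be a $d\times d$ complex Hadamard matrix whose dephased form has an ER pair of columns or an ER pair of rows. Then $H$ is not isolated; that is, $H$ belongs to a continuous one-parameter family of complex Hadamard matrices containing matrices inequivalent to $H$.
   Context: A $d\times d$ complex Hadamard matrix has unimodular entries and pairwise orthogonal columns. Two complex Hadamard matrices $H_1,H_2$ are equivalent if $H_2=D_1P_1H_1P_2D_2$ for diagonal unitary $D_1,D_2$ and permutation matrices $P_1,P_2$. The dephased form of $H$ is the unique matrix $H'=D_1HD_2$ ($D_1,D_2$ diagonal unitary) whose first row and first column consist of $1$'s. Two distinct columns $C_A,C_B$ form an ER pair if $\overline{(C_A)_j}(C_B)_j\in\{1,-1\}$ for all $j$; ER pairs of rows are defined analogously. A complex Hadamard matrix is isolated if it does not belong to any continuous family of (pairwise inequivalent) complex Hadamard matrices. *)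

theory Defs
  imports "HOL-Analysis.Analysis"
begin

text \<open>A d x d complex matrix is represented as a function nat => nat => complex;
only the entries with both indices < d are relevant. Index 0 is the first row/column.\<close>

definition complex_hadamard :: "nat \<Rightarrow> (nat \<Rightarrow> nat \<Rightarrow> complex) \<Rightarrow> bool" where
  "complex_hadamard d H \<longleftrightarrow>
     (\<forall>i<d. \<forall>j<d. norm (H i j) = 1) \<and>
     (\<forall>j<d. \<forall>k<d. j \<noteq> k \<longrightarrow> (\<Sum>i<d. cnj (H i j) * H i k) = 0)"

text \<open>H2 = D1 P1 H1 P2 D2 with D1, D2 diagonal unitary and P1, P2 permutation matrices,
written out entrywise.\<close>
definition hadamard_equiv :: "nat \<Rightarrow> (nat \<Rightarrow> nat \<Rightarrow> complex) \<Rightarrow> (nat \<Rightarrow> nat \<Rightarrow> complex) \<Rightarrow> bool" where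
  "hadamard_equiv d H1 H2 \<longleftrightarrow>
     (\<exists>a b :: nat \<Rightarrow> complex. \<exists>\<sigma> \<tau> :: nat \<Rightarrow> nat.
        (\<forall>i<d. norm (a i) = 1) \<and> (\<forall>j<d. norm (b j) = 1) \<and>
        \<sigma> permutes {..<d} \<and> \<tau> permutes {..<d} \<and>
        (\<forall>i<d. \<forall>j<d. H2 i j = a i * H1 (\<sigma> i) (\<tau> j) * b j))"

text \<open>The dephased form: the unique matrix D1 H D2 (D1, D2 diagonal unitary) whose first row and
first column consist of 1's (entries outside the d x d range are set to 0 for uniqueness).\<close>
definition dephased :: "nat \<Rightarrow> (nat \<Rightarrow> nat \<Rightarrow> complex) \<Rightarrow> (nat \<Rightarrow> nat \<Rightarrow> complex)" where
  "dephased d H = (THE H'.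
     (\<exists>a b :: nat \<Rightarrow> complex. (\<forall>i<d. norm (a i) = 1) \<and> (\<forall>j<d. norm (b j) = 1) \<and>
        (\<forall>i<d. \<forall>j<d. H' i j = a i * H i j * b j)) \<and>
     (\<forall>j<d. H' 0 j = 1) \<and> (\<forall>i<d. H' i 0 = 1) \<and>
     (\<forall>i j. d \<le> i \<or> d \<le> j \<longrightarrow> H' i j = 0))"

definition ER_pair_columns :: "nat \<Rightarrow> (nat \<Rightarrow> nat \<Rightarrow> complex) \<Rightarrow> bool" where
  "ER_pair_columns d M \<longleftrightarrow>
     (\<exists>A<d. \<exists>B<d. A \<noteq> B \<and> (\<forall>j<d. cnj (M j A) * M j B \<in> {1, -1}))"

definition ER_pair_rows :: "nat \<Rightarrow> (nat \<Rightarrow> nat \<Rightarrow> complex) \<Rightarrow> bool" where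
  "ER_pair_rows d M \<longleftrightarrow>
     (\<exists>A<d. \<exists>B<d. A \<noteq> B \<and> (\<forall>j<d. cnj (M A j) * M B j \<in> {1, -1}))"

end

theory Submission
  imports Defs "Jordan_Normal_Form.Determinant"
begin

text \<open>The quantities \<open>H i j * H k l * cnj (H i l) * cnj (H k j)\<close> form a finite set
that can only shrink under equivalence. If the columns \<open>A\<close>, \<open>B\<close> of \<open>H\<close> have quotient
\<open>cnj (H i A) * H i B = \<plusminus>c\<close>, multiplying the entries in columns \<open>A\<close>, \<open>B\<close> of the rows with sign
\<open>-1\<close> by \<open>cis t\<close> keeps all columns orthogonal, because both the sum and the signed sum of
\<open>cnj (H i A) * H i k\<close> over the rows vanish for any third column \<open>k\<close>. Rows of both signs
exist, so some invariant of the deformed matrix is multiplied by \<open>cis t\<close> and sweeps out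
infinitely many values; hence the deformation leaves the equivalence class of \<open>H\<close>. Rows are
reduced to columns by transposition.\<close>

lemma cnj_mult_self_unimodular: "norm (z::complex) = 1 \<Longrightarrow> cnj z * z = 1"
  by (metis complex_norm_square mult.commute of_real_1 power_one)

lemma complex_hadamard_unimodular:
  "complex_hadamard d H \<Longrightarrow> i < d \<Longrightarrow> j < d \<Longrightarrow> norm (H i j) = 1"
  by (simp add: complex_hadamard_def)

lemma complex_hadamard_orthogonal:
  "complex_hadamard d H \<Longrightarrow> j < d \<Longrightarrow> k < d \<Longrightarrow> j \<noteq> k \<Longrightarrow> (\<Sum>i<d. cnj (H i j) * H i k) = 0"
  by (simp add: complex_hadamard_def)

text \<open>Orthogonal columns of equal length make \<open>H\<close> a multiple of a unitary matrix; the rows are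
then orthogonal because a one-sided inverse of a square matrix is two-sided.\<close>

lemma complex_hadamard_transposed:
  assumes had: "complex_hadamard d H"
  shows "complex_hadamard d (\<lambda>i j. H j i)"
proof (cases "d = 0")
  case True
  then show ?thesis by (simp add: complex_hadamard_def)
next
  case False
  define M where "M = mat d d (\<lambda>(i,j). H i j)"
  define N where "N = mat d d (\<lambda>(i,j). cnj (H j i) / of_nat d)"
  have M: "M \<in> carrier_mat d d" and N: "N \<in> carrier_mat d d"
    unfolding M_def N_def by auto
  have "N * M = 1\<^sub>m d"
  proof (rule eq_matI)
    fix i j assume "i < dim_row (1\<^sub>m d :: complex mat)" "j < dim_col (1\<^sub>m d :: complex mat)"
    then have ij: "i < d" "j < d" by auto
    have "(N * M) $$ (i,j) = (\<Sum>k<d. cnj (H k i) * H k j) / of_nat d"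
      using ij unfolding M_def N_def
      by (simp add: scalar_prod_def atLeast0LessThan sum_divide_distrib)
    also have "\<dots> = 1\<^sub>m d $$ (i,j)"
    proof (cases "i = j")
      case True
      then have "(\<Sum>k<d. cnj (H k i) * H k j) = of_nat d"
        using ij complex_hadamard_unimodular[OF had] by (simp add: cnj_mult_self_unimodular)
      then show ?thesis using True ij False by simp
    qed (use ij complex_hadamard_orthogonal[OF had] in simp)
    finally show "(N * M) $$ (i,j) = 1\<^sub>m d $$ (i,j)" .
  qed (auto simp: M_def N_def)
  then have MN: "M * N = 1\<^sub>m d"
    by (rule mat_mult_left_right_inverse[OF N M])
  show ?thesis
    unfolding complex_hadamard_def
  proof (intro conjI allI impI)
    fix i j assume "i < d" "j < d"
    then show "norm (H j i) = 1" using complex_hadamard_unimodular[OF had] by simp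
  next
    fix j k assume jk: "j < d" "k < d" "j \<noteq> k"
    have "(\<Sum>i<d. cnj (H j i) * H k i) / of_nat d = (M * N) $$ (k,j)"
      using jk unfolding M_def N_def
      by (simp add: scalar_prod_def atLeast0LessThan sum_divide_distrib mult.commute)
    also have "\<dots> = 0" using MN jk by simp
    finally show "(\<Sum>i<d. cnj (H j i) * H k i) = 0" using False by simp
  qed
qed

lemma dephased_closed_form:
  assumes d: "d > 0" and unimod: "\<forall>i<d. \<forall>j<d. norm (H i j) = 1"
  shows "dephased d H = (\<lambda>i j. if i < d \<and> j < d then H i j * H 0 0 / (H i 0 * H 0 j) else 0)"
    (is "_ = ?D")
  unfolding dephased_def
proof (rule the_equality)
  have nz: "\<And>i j. i < d \<Longrightarrow> j < d \<Longrightarrow> H i j \<noteq> 0" using unimod by fastforce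
  have "\<exists>a b :: nat \<Rightarrow> complex. (\<forall>i<d. norm (a i) = 1) \<and> (\<forall>j<d. norm (b j) = 1) \<and>
      (\<forall>i<d. \<forall>j<d. ?D i j = a i * H i j * b j)"
    by (rule exI[of _ "\<lambda>i. 1 / H i 0"], rule exI[of _ "\<lambda>j. H 0 0 / H 0 j"])
      (use unimod d nz in \<open>auto simp: norm_divide\<close>)
  then show "(\<exists>a b :: nat \<Rightarrow> complex. (\<forall>i<d. norm (a i) = 1) \<and> (\<forall>j<d. norm (b j) = 1) \<and>
        (\<forall>i<d. \<forall>j<d. ?D i j = a i * H i j * b j)) \<and>
      (\<forall>j<d. ?D 0 j = 1) \<and> (\<forall>i<d. ?D i 0 = 1) \<and> (\<forall>i j. d \<le> i \<or> d \<le> j \<longrightarrow> ?D i j = 0)"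
    using d nz by auto
next
  fix H' assume H': "(\<exists>a b :: nat \<Rightarrow> complex. (\<forall>i<d. norm (a i) = 1) \<and> (\<forall>j<d. norm (b j) = 1) \<and>
        (\<forall>i<d. \<forall>j<d. H' i j = a i * H i j * b j)) \<and>
      (\<forall>j<d. H' 0 j = 1) \<and> (\<forall>i<d. H' i 0 = 1) \<and> (\<forall>i j. d \<le> i \<or> d \<le> j \<longrightarrow> H' i j = 0)"
  then obtain a b where na: "\<forall>i<d. norm (a i) = 1" and nb: "\<forall>j<d. norm (b j) = 1"
    and H'_eq: "\<forall>i<d. \<forall>j<d. H' i j = a i * H i j * b j" by blast
  show "H' = ?D"
  proof (intro ext)
    fix i j
    show "H' i j = ?D i j"
    proof (cases "i < d \<and> j < d")
      case True
      have row: "a i * H i 0 * b 0 = 1" and col: "a 0 * H 0 j * b j = 1"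
        and corner: "a 0 * H 0 0 * b 0 = 1"
        using H' H'_eq True d by metis+
      have "a 0 * b 0 \<noteq> 0" using na nb d by fastforce
      have "(a i * b j * (H i 0 * H 0 j)) * (a 0 * b 0) = (a i * H i 0 * b 0) * (a 0 * H 0 j * b j)"
        by (simp add: algebra_simps)
      also have "\<dots> = a 0 * H 0 0 * b 0" using row col corner by simp
      also have "\<dots> = H 0 0 * (a 0 * b 0)" by (simp add: algebra_simps)
      finally have "a i * b j * (H i 0 * H 0 j) = H 0 0" using \<open>a 0 * b 0 \<noteq> 0\<close> by simp
      moreover have "H i 0 * H 0 j \<noteq> 0" using unimod True d by fastforce
      ultimately have "a i * b j = H 0 0 / (H i 0 * H 0 j)" by (simp add: field_simps)
      moreover have "H' i j = (a i * b j) * H i j" using H'_eq True by (simp add: mult_ac)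
      ultimately show ?thesis using True by simp
    qed (use H' in auto)
  qed
qed

lemma dephased_transposed:
  assumes "d > 0" and "\<forall>i<d. \<forall>j<d. norm (H i j) = 1"
  shows "dephased d (\<lambda>i j. H j i) = (\<lambda>i j. dephased d H j i)"
  using assms dephased_closed_form[of d H] dephased_closed_form[of d "\<lambda>i j. H j i"]
  by (auto intro!: ext simp: mult.commute)

lemma ER_pair_columns_dephasedE:
  assumes d: "d > 0" and unimod: "\<forall>i<d. \<forall>j<d. norm (H i j) = 1"
    and "ER_pair_columns d (dephased d H)"
  obtains A B c where "A < d" "B < d" "A \<noteq> B" "norm c = 1"
    "\<forall>j<d. H j B = c * H j A \<or> H j B = - c * H j A"
proof -
  obtain A B where AB: "A < d" "B < d" "A \<noteq> B"
    and ER: "\<forall>j<d. cnj (dephased d H j A) * dephased d H j B \<in> {1, -1}"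
    using assms(3) unfolding ER_pair_columns_def by blast
  define c where "c = cnj (H 0 A) * H 0 B"
  have cnj_eq: "cnj (H i j) = 1 / H i j" if "i < d" "j < d" for i j
    using divide_conv_cnj[of "H i j" 1] unimod that by simp
  have nz: "H i j \<noteq> 0" if "i < d" "j < d" for i j
    using unimod that by fastforce
  have "H j B = c * H j A \<or> H j B = - c * H j A" if j: "j < d" for j
  proof -
    have "cnj (dephased d H j A) * dephased d H j B = H j B / H j A / c"
      using j AB d nz unfolding dephased_closed_form[OF d unimod] c_def
      by (simp add: cnj_eq field_simps)
    moreover have "c \<noteq> 0" unfolding c_def using AB d nz by simp
    ultimately show ?thesis using ER j nz AB by (auto simp: field_simps)
  qed
  moreover have "norm c = 1" unfolding c_def using unimod AB d by (simp add: norm_mult)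
  ultimately show ?thesis using that AB by blast
qed

definition haagerup_set :: "nat \<Rightarrow> (nat \<Rightarrow> nat \<Rightarrow> complex) \<Rightarrow> complex set" where
  "haagerup_set d H = (\<lambda>(i,j,k,l). H i j * H k l * cnj (H i l) * cnj (H k j)) `
     ({..<d} \<times> {..<d} \<times> {..<d} \<times> {..<d})"

lemma finite_haagerup_set: "finite (haagerup_set d H)"
  unfolding haagerup_set_def by simp

lemma haagerup_setI:
  "i < d \<Longrightarrow> j < d \<Longrightarrow> k < d \<Longrightarrow> l < d \<Longrightarrow>
    H i j * H k l * cnj (H i l) * cnj (H k j) \<in> haagerup_set d H"
  unfolding haagerup_set_def by (rule rev_image_eqI[of "(i,j,k,l)"]) auto

text \<open>Each invariant of \<open>a i * H (\<sigma> i) (\<tau> j) * b j\<close> is an invariant of \<open>H\<close>, since every phase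
occurs once plainly and once conjugated.\<close>

lemma hadamard_equiv_haagerup_set_subset:
  assumes "hadamard_equiv d H K"
  shows "haagerup_set d K \<subseteq> haagerup_set d H"
proof
  obtain a b \<sigma> \<tau> where na: "\<forall>i<d. norm (a i) = 1" and nb: "\<forall>j<d. norm (b j) = 1"
    and \<sigma>: "\<sigma> permutes {..<d}" and \<tau>: "\<tau> permutes {..<d}"
    and K: "\<forall>i<d. \<forall>j<d. K i j = a i * H (\<sigma> i) (\<tau> j) * b j"
    using assms unfolding hadamard_equiv_def by blast
  fix z assume "z \<in> haagerup_set d K"
  then obtain i j k l where ijkl: "i < d" "j < d" "k < d" "l < d"
    and z: "z = K i j * K k l * cnj (K i l) * cnj (K k j)"
    unfolding haagerup_set_def by auto
  have "z = (cnj (a i) * a i) * (cnj (a k) * a k) * (cnj (b j) * b j) * (cnj (b l) * b l) *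
      (H (\<sigma> i) (\<tau> j) * H (\<sigma> k) (\<tau> l) * cnj (H (\<sigma> i) (\<tau> l)) * cnj (H (\<sigma> k) (\<tau> j)))"
    using z K ijkl by (simp add: mult_ac)
  then have "z = H (\<sigma> i) (\<tau> j) * H (\<sigma> k) (\<tau> l) * cnj (H (\<sigma> i) (\<tau> l)) * cnj (H (\<sigma> k) (\<tau> j))"
    using na nb ijkl by (simp add: cnj_mult_self_unimodular)
  moreover have "\<sigma> i < d" "\<sigma> k < d" "\<tau> j < d" "\<tau> l < d"
    using ijkl \<sigma> \<tau> permutes_in_image by fastforce+
  ultimately show "z \<in> haagerup_set d H" using haagerup_setI by simp
qed

lemma cis_mult_escapes_finite:
  assumes "finite S" and "v \<noteq> 0"
  shows "\<exists>t\<in>{0..1::real}. cis t * v \<notin> S"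
proof -
  have "inj_on cis {0..1::real}"
  proof (rule inj_onI)
    fix s t :: real assume "s \<in> {0..1}" "t \<in> {0..1}" "cis s = cis t"
    moreover have "1 \<le> pi / 2" using pi_gt3 by simp
    moreover have "Im (cis s) = sin s" "Im (cis t) = sin t" by simp_all
    ultimately show "s = t" using sin_inj_pi[of s t] by auto
  qed
  then have "inj_on (\<lambda>t. cis t * v) {0..1}"
    using assms(2) by (auto simp: inj_on_def)
  then have "infinite ((\<lambda>t. cis t * v) ` {0..1::real})"
    using finite_imageD infinite_Icc[of "0::real" 1] by auto
  then have "\<not> (\<lambda>t. cis t * v) ` {0..1} \<subseteq> S"
    using assms(1) finite_subset by auto
  then show ?thesis by blast
qed

lemma complex_hadamard_rephase_column_pair:
  assumes had: "complex_hadamard d G" and AB: "A < d" "B < d" "A \<noteq> B"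
    and g: "\<And>i. norm (g i) = 1"
    and mixed: "\<And>j k. j \<in> {A, B} \<Longrightarrow> k < d \<Longrightarrow> k \<notin> {A, B} \<Longrightarrow>
      (\<Sum>i<d. cnj (G i j * g i) * G i k) = 0"
  shows "complex_hadamard d (\<lambda>i j. if j \<in> {A, B} then G i j * g i else G i j)"
    (is "complex_hadamard d ?G'")
  unfolding complex_hadamard_def
proof (intro conjI allI impI)
  fix i j assume "i < d" "j < d"
  then show "norm (?G' i j) = 1" using complex_hadamard_unimodular[OF had] g by (simp add: norm_mult)
next
  fix j k assume jk: "j < d" "k < d" "j \<noteq> k"
  consider "j \<in> {A, B}" "k \<in> {A, B}" | "j \<notin> {A, B}" "k \<notin> {A, B}"
    | "j \<in> {A, B}" "k \<notin> {A, B}" | "j \<notin> {A, B}" "k \<in> {A, B}"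
    by blast
  then show "(\<Sum>i<d. cnj (?G' i j) * ?G' i k) = 0"
  proof cases
    case 1
    then have "(\<Sum>i<d. cnj (?G' i j) * ?G' i k) = (\<Sum>i<d. (cnj (g i) * g i) * (cnj (G i j) * G i k))"
      by (simp add: mult_ac)
    then show ?thesis using g jk complex_hadamard_orthogonal[OF had] by (simp add: cnj_mult_self_unimodular)
  next
    case 2
    then show ?thesis using jk complex_hadamard_orthogonal[OF had] by simp
  next
    case 3
    then show ?thesis using mixed jk by simp
  next
    case 4
    then have "cnj (\<Sum>i<d. cnj (G i k * g i) * G i j) = 0" using mixed jk by simp
    then show ?thesis using 4 by (simp add: mult_ac)
  qed
qed

lemma ER_pair_signed_sum:
  assumes had: "complex_hadamard d G" and AB: "A < d" "B < d" "A \<noteq> B" and c: "c \<noteq> 0"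
    and e: "\<And>i. e i \<in> {1, -1}" and col: "\<And>i. i < d \<Longrightarrow> G i B = c * e i * G i A"
    and k: "k < d" "k \<noteq> B"
  shows "(\<Sum>i<d. e i * (cnj (G i A) * G i k)) = 0"
proof -
  have cnj_e: "cnj (e i) = e i" for i using e[of i] by auto
  have "cnj c * (\<Sum>i<d. e i * (cnj (G i A) * G i k)) = (\<Sum>i<d. cnj (G i B) * G i k)"
    unfolding sum_distrib_left by (intro sum.cong refl) (simp add: col cnj_e mult_ac)
  also have "\<dots> = 0" using complex_hadamard_orthogonal[OF had] AB k by simp
  finally show ?thesis using c by simp
qed

lemma ER_pair_sign_sum:
  assumes had: "complex_hadamard d G" and AB: "A < d" "B < d" "A \<noteq> B" and c: "c \<noteq> 0"
    and col: "\<And>i. i < d \<Longrightarrow> G i B = c * e i * G i A"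
  shows "(\<Sum>i<d. e i) = 0"
proof -
  have "c * e i = cnj (G i A) * G i B" if "i < d" for i
  proof -
    have "cnj (G i A) * G i B = c * e i * (cnj (G i A) * G i A)"
      using col[OF that] by (simp add: mult_ac)
    then show ?thesis
      using cnj_mult_self_unimodular[OF complex_hadamard_unimodular[OF had that AB(1)]] by simp
  qed
  then have "c * (\<Sum>i<d. e i) = (\<Sum>i<d. cnj (G i A) * G i B)"
    unfolding sum_distrib_left by (intro sum.cong) simp_all
  also have "\<dots> = 0" using complex_hadamard_orthogonal[OF had] AB by simp
  finally show ?thesis using c by simp
qed

lemma zero_sum_signs_both_occur:
  fixes e :: "nat \<Rightarrow> complex"
  assumes sum: "(\<Sum>i<d. e i) = 0" and d: "d > 0" and e: "\<And>i. e i \<in> {1, -1}"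
  shows "\<exists>i<d. e i = 1" and "\<exists>i<d. e i = -1"
proof -
  show "\<exists>i<d. e i = 1"
  proof (rule ccontr)
    assume "\<not> (\<exists>i<d. e i = 1)"
    then have "(\<Sum>i<d. e i) = (\<Sum>i<d. -1)" using e by (intro sum.cong) blast+
    then show False using sum d by simp
  qed
  show "\<exists>i<d. e i = -1"
  proof (rule ccontr)
    assume "\<not> (\<exists>i<d. e i = -1)"
    then have "(\<Sum>i<d. e i) = (\<Sum>i<d. 1)" using e by (intro sum.cong) blast+
    then show False using sum d by simp
  qed
qed

lemma ER_pair_rephasing_hadamard:
  assumes had: "complex_hadamard d G" and AB: "A < d" "B < d" "A \<noteq> B" and c: "c \<noteq> 0"
    and e: "\<And>i. e i \<in> {1, -1}" and col: "\<And>i. i < d \<Longrightarrow> G i B = c * e i * G i A"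
    and w: "norm w = 1"
  shows "complex_hadamard d (\<lambda>i j. if j \<in> {A, B} then G i j * (if e i = 1 then 1 else w) else G i j)"
proof -
  define g where "g i = (if e i = 1 then 1 else w)" for i
  define \<alpha> \<beta> where "\<alpha> = (1 + cnj w) / 2" and "\<beta> = (1 - cnj w) / 2"
  \<comment> \<open>\<open>g\<close> is affine in the sign, so its sums split into the plain and the signed one\<close>
  have g_affine: "cnj (g i) = \<alpha> + \<beta> * e i" for i
    using e[of i] unfolding g_def \<alpha>_def \<beta>_def by (auto simp: field_simps)
  have plain: "(\<Sum>i<d. cnj (G i A) * G i k) = 0" if "k < d" "k \<notin> {A, B}" for k
    using complex_hadamard_orthogonal[OF had] AB that by simp
  have signed: "(\<Sum>i<d. e i * (cnj (G i A) * G i k)) = 0" if "k < d" "k \<notin> {A, B}" for k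
    using ER_pair_signed_sum[OF had AB c e col] that by simp
  have "complex_hadamard d (\<lambda>i j. if j \<in> {A, B} then G i j * g i else G i j)"
  proof (rule complex_hadamard_rephase_column_pair[OF had AB])
    show "norm (g i) = 1" for i unfolding g_def using w by simp
    fix j k assume j: "j \<in> {A, B}" and k: "k < d" "k \<notin> {A, B}"
    have A_sum: "(\<Sum>i<d. cnj (G i A * g i) * G i k) =
        \<alpha> * (\<Sum>i<d. cnj (G i A) * G i k) + \<beta> * (\<Sum>i<d. e i * (cnj (G i A) * G i k))"
      by (simp add: g_affine sum_distrib_left sum.distrib[symmetric] algebra_simps)
    have B_term: "cnj (G i B * g i) * G i k =
        cnj c * (\<alpha> * (e i * (cnj (G i A) * G i k)) + \<beta> * (cnj (G i A) * G i k))" if "i < d" for i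
      using e[of i] that by (auto simp: col g_affine algebra_simps)
    have "(\<Sum>i<d. cnj (G i B * g i) * G i k) =
        (\<Sum>i<d. cnj c * (\<alpha> * (e i * (cnj (G i A) * G i k)) + \<beta> * (cnj (G i A) * G i k)))"
      by (intro sum.cong refl B_term) simp
    also have "\<dots> =
        cnj c * (\<alpha> * (\<Sum>i<d. e i * (cnj (G i A) * G i k)) + \<beta> * (\<Sum>i<d. cnj (G i A) * G i k))"
      by (simp only: sum.distrib flip: sum_distrib_left)
    finally have B_sum: "(\<Sum>i<d. cnj (G i B * g i) * G i k) =
        cnj c * (\<alpha> * (\<Sum>i<d. e i * (cnj (G i A) * G i k)) + \<beta> * (\<Sum>i<d. cnj (G i A) * G i k))" .
    show "(\<Sum>i<d. cnj (G i j * g i) * G i k) = 0"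
      using j A_sum B_sum plain[OF k] signed[OF k] by auto
  qed
  then show ?thesis unfolding g_def .
qed

definition hadamard_deformation ::
    "nat \<Rightarrow> (nat \<Rightarrow> nat \<Rightarrow> complex) \<Rightarrow> (real \<Rightarrow> nat \<Rightarrow> nat \<Rightarrow> complex) \<Rightarrow> bool" where
  "hadamard_deformation d H F \<longleftrightarrow>
     (\<forall>i<d. \<forall>j<d. continuous_on {0..1} (\<lambda>t. F t i j)) \<and>
     (\<forall>t\<in>{0..1}. complex_hadamard d (F t)) \<and> (\<forall>i<d. \<forall>j<d. F 0 i j = H i j)"

lemma ER_pair_deformation:
  assumes had: "complex_hadamard d G" and d: "2 < d" and AB: "A < d" "B < d" "A \<noteq> B"
    and c: "norm c = 1" and ER: "\<forall>i<d. G i B = c * G i A \<or> G i B = - c * G i A"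
  shows "\<exists>F. hadamard_deformation d G F \<and>
    (\<exists>t\<in>{0..1}. \<not> haagerup_set d (F t) \<subseteq> haagerup_set d G)"
proof -
  have c0: "c \<noteq> 0" using c by auto
  define e where "e i = (if G i B = c * G i A then 1 else -1 :: complex)" for i
  have e: "e i \<in> {1, -1}" for i by (simp add: e_def)
  have col: "G i B = c * e i * G i A" if "i < d" for i
    using ER that by (auto simp: e_def)
  define F where "F t i j = (if j \<in> {A, B} then G i j * (if e i = 1 then 1 else cis t) else G i j)"
    for t i j
  have "hadamard_deformation d G F"
    unfolding hadamard_deformation_def
  proof (intro conjI allI impI ballI)
    fix i j
    show "continuous_on {0..1} (\<lambda>t. F t i j)"
      unfolding F_def by (cases "j \<in> {A, B}"; cases "e i = 1") (simp_all add: continuous_intros)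
  next
    fix t :: real
    show "complex_hadamard d (F t)"
      unfolding F_def using ER_pair_rephasing_hadamard[OF had AB c0 e col] by simp
  qed (simp add: F_def)
  moreover
  obtain i0 k0 where i0: "i0 < d" "e i0 = -1" and k0: "k0 < d" "e k0 = 1"
    using zero_sum_signs_both_occur[OF ER_pair_sign_sum[OF had AB c0 col]] d e by auto
  obtain C where C: "C < d" "C \<notin> {A, B}"
  proof -
    have "\<exists>C\<in>{0, 1, 2 :: nat}. C \<notin> {A, B}" by auto
    then obtain C :: nat where "C \<in> {0, 1, 2}" "C \<notin> {A, B}" by blast
    then show ?thesis using that[of C] d by auto
  qed
  define v where "v = G i0 A * G k0 C * cnj (G i0 C) * cnj (G k0 A)"
  \<comment> \<open>of the four entries of this invariant only \<open>F t i0 A\<close> is rephased\<close>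
  have "cis t * v \<in> haagerup_set d (F t)" for t
  proof -
    have "F t i0 A * F t k0 C * cnj (F t i0 C) * cnj (F t k0 A) = cis t * v"
      unfolding F_def v_def using i0 k0 C by simp
    then show ?thesis using haagerup_setI[of i0 d A k0 C "F t"] i0 k0 C AB by simp
  qed
  moreover have "v \<noteq> 0"
    unfolding v_def using complex_hadamard_unimodular[OF had] i0 k0 C AB by fastforce
  then obtain t where "t \<in> {0..1}" "cis t * v \<notin> haagerup_set d G"
    using cis_mult_escapes_finite[OF finite_haagerup_set] by blast
  ultimately show ?thesis by blast
qed

lemma hadamard_deformation_transposed:
  "hadamard_deformation d H F \<Longrightarrow> hadamard_deformation d (\<lambda>i j. H j i) (\<lambda>t i j. F t j i)"
  unfolding hadamard_deformation_def using complex_hadamard_transposed by blast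

lemma hadamard_equiv_transposed:
  assumes "hadamard_equiv d H K"
  shows "hadamard_equiv d (\<lambda>i j. H j i) (\<lambda>i j. K j i)"
proof -
  obtain a b \<sigma> \<tau> where "\<forall>i<d. norm (a i) = 1" "\<forall>j<d. norm (b j) = 1"
    "\<sigma> permutes {..<d}" "\<tau> permutes {..<d}" "\<forall>i<d. \<forall>j<d. K i j = a i * H (\<sigma> i) (\<tau> j) * b j"
    using assms unfolding hadamard_equiv_def by blast
  then show ?thesis
    unfolding hadamard_equiv_def by (intro exI[of _ b] exI[of _ a] exI[of _ \<tau>] exI[of _ \<sigma>]) (simp add: mult_ac)
qed

lemma ER_pair_columns_dephased_deformation:
  assumes had: "complex_hadamard d H" and d: "2 < d" and ER: "ER_pair_columns d (dephased d H)"
  shows "\<exists>F. hadamard_deformation d H F \<and> (\<exists>t\<in>{0..1}. \<not> hadamard_equiv d H (F t))"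
proof -
  obtain A B c where AB: "A < d" "B < d" "A \<noteq> B" and c: "norm c = 1"
    and col: "\<forall>j<d. H j B = c * H j A \<or> H j B = - c * H j A"
    using ER_pair_columns_dephasedE[OF _ _ ER] had d by (auto simp: complex_hadamard_def)
  then show ?thesis
    using ER_pair_deformation[OF had d AB c col] hadamard_equiv_haagerup_set_subset by blast
qed

theorem corollary1:
  fixes d :: nat and H :: "nat \<Rightarrow> nat \<Rightarrow> complex"
  assumes "d > 2"
    and "complex_hadamard d H"
    and "ER_pair_columns d (dephased d H) \<or> ER_pair_rows d (dephased d H)"
  shows "\<exists>F :: real \<Rightarrow> nat \<Rightarrow> nat \<Rightarrow> complex.
           (\<forall>i<d. \<forall>j<d. continuous_on {0..1} (\<lambda>t. F t i j)) \<and>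
           (\<forall>t\<in>{0..1}. complex_hadamard d (F t)) \<and>
           (\<forall>i<d. \<forall>j<d. F 0 i j = H i j) \<and>
           (\<exists>t\<in>{0..1}. \<not> hadamard_equiv d H (F t))"
proof -
  have "\<exists>F. hadamard_deformation d H F \<and> (\<exists>t\<in>{0..1}. \<not> hadamard_equiv d H (F t))"
    using assms(3)
  proof
    assume "ER_pair_columns d (dephased d H)"
    then show ?thesis using ER_pair_columns_dephased_deformation assms(1,2) by blast
  next
    assume "ER_pair_rows d (dephased d H)"
    then have "ER_pair_columns d (dephased d (\<lambda>i j. H j i))"
      using dephased_transposed[of d H] assms(1,2)
      by (simp add: ER_pair_rows_def ER_pair_columns_def complex_hadamard_def)
    then obtain F t where "hadamard_deformation d (\<lambda>i j. H j i) F" "t \<in> {0..1}"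
      "\<not> hadamard_equiv d (\<lambda>i j. H j i) (F t)"
      using ER_pair_columns_dephased_deformation complex_hadamard_transposed assms(1,2) by blast
    then show ?thesis
      using hadamard_deformation_transposed hadamard_equiv_transposed by fastforce
  qed
  then show ?thesis unfolding hadamard_deformation_def by blast
qed

end
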